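(* For every positive integer $n$, $$\sum_{k=0}^{n-1}k(k+1)(8k+9)T_kT_{k+1}=\frac{(-1)^nn}{6}\sum_{k=0}^{n-1}\binom{n-1}{k}\binom{-n-1}{k}C_k3^{n-1-k}a(n,k),$$ where $$a(n,k)=4k^2n^2-8kn^3-14k^2n-14kn^2-4n^3+13k^2-11kn-26n^2+39k+4n+26.$$
   Context: $T_n=\sum_{k=0}^{\lfloor n/2\rfloor}\binom{n}{2k}\binom{2k}{k}$ is the central trinomial coefficient (constant term of $(1+x+x^{-1})^n$); $C_k=\binom{2k}{k}/(k+1)$; $\binom{x}{k}=x(x-1)\cdots(x-k+1)/k!$ for any integer $x$. *)

theory Defs
  imports Complex_Main
begin

definition central_trinomial :: "nat \<Rightarrow> nat" where
  "central_trinomial n = (\<Sum>k = 0..n div 2. (n choose (2*k)) * ((2*k) choose k))"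

definition catalan :: "nat \<Rightarrow> rat" where
  "catalan k = of_nat ((2*k) choose k) / of_nat (k + 1)"

definition a_coef :: "int \<Rightarrow> int \<Rightarrow> int" where
  "a_coef n k = 4*k^2*n^2 - 8*k*n^3 - 14*k^2*n - 14*k*n^2 - 4*n^3 + 13*k^2
     - 11*k*n - 26*n^2 + 39*k + 4*n + 26"

end

theory Submission
  imports Defs
begin

text \<open>Everything is creative telescoping. The central trinomial coefficients satisfy
  \<open>(n+2) T(n+2) = (2n+3) T(n+1) + 3(n+1) T(n)\<close>. The sums
  \<open>S(n) = \<Sum>k binom(n,k) binom(n+k,k) binom(2k,k) (-3)^(n-k)\<close> and
  \<open>P(n) = \<Sum>k binom(n,k) binom(n+k+1,k) binom(2k,k) (-3)^(n-k)\<close> satisfy a coupled pair of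
  recurrences which, together with that of \<open>T\<close>, give \<open>S(n) = T(n)^2\<close> and
  \<open>P(n) = T(n) T(n+1)\<close> by induction. After rewriting \<open>binom(-n-1,k) = (-1)^k binom(n+k,k)\<close>,
  the right-hand side at \<open>n+1\<close> minus that at \<open>n\<close> is \<open>n(n+1)(8n+9) P(n)\<close>, which is the summand on
  the left. Each recurrence is checked termwise: the relevant combination of summands equals
  \<open>G(k+1) - G(k)\<close> for an explicit hypergeometric certificate \<open>G\<close> vanishing at both ends of the
  summation range.\<close>

section \<open>Binomial coefficients and telescoping\<close>

lemma of_nat_Suc_choose_mult:
  "(of_nat (Suc m choose k) :: 'a :: comm_ring_1) * (of_nat m + 1 - of_nat k)
     = (of_nat m + 1) * of_nat (m choose k)"
proof (cases "k \<le> Suc m")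
  case True
  have "(Suc m - k) * (Suc m choose k) = Suc m * (m choose k)"
    using binomial_absorb_comp[of "Suc m" k] by simp
  then have "(of_nat (Suc m - k) :: 'a) * of_nat (Suc m choose k) = of_nat (Suc m) * of_nat (m choose k)"
    by (metis of_nat_mult)
  with True show ?thesis
    by (simp add: of_nat_diff algebra_simps)
qed (simp add: binomial_eq_0)

lemma of_nat_choose_Suc_mult:
  "(of_nat (m choose Suc k) :: 'a :: comm_ring_1) * (of_nat k + 1)
     = of_nat (m choose k) * (of_nat m - of_nat k)"
proof (cases "k \<le> m")
  case True
  have "Suc k * (m choose Suc k) = (m - k) * (m choose k)"
    using binomial_absorption[of k m] binomial_absorb_comp[of m k] by simp
  then have "(of_nat (Suc k) :: 'a) * of_nat (m choose Suc k) = of_nat (m - k) * of_nat (m choose k)"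
    by (metis of_nat_mult)
  with True show ?thesis
    by (simp add: of_nat_diff algebra_simps)
qed (simp add: binomial_eq_0)

lemma of_nat_central_binomial_Suc:
  "(of_nat (2 * Suc k choose Suc k) :: 'a :: idom) * (of_nat k + 1)^2
     = of_nat (2 * k choose k) * (2 * of_nat k + 1) * (2 * of_nat k + 2)"
proof -
  have up: "(of_nat (Suc (Suc (2*k)) choose Suc k) :: 'a) * (of_nat k + 1)
      = of_nat (Suc (Suc (2*k)) choose k) * (of_nat k + 2)"
    using of_nat_choose_Suc_mult[of "Suc (Suc (2*k))" k] by (simp add: algebra_simps)
  have mid: "(of_nat (Suc (Suc (2*k)) choose k) :: 'a) * (of_nat k + 2)
      = (2 * of_nat k + 2) * of_nat (Suc (2*k) choose k)"
    using of_nat_Suc_choose_mult[of "Suc (2*k)" k] by (simp add: algebra_simps)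
  have low: "(of_nat (Suc (2*k) choose k) :: 'a) * (of_nat k + 1)
      = (2 * of_nat k + 1) * of_nat (2*k choose k)"
    using of_nat_Suc_choose_mult[of "2*k" k] by (simp add: algebra_simps)
  have "(of_nat (2 * Suc k choose Suc k) :: 'a) * (of_nat k + 1)^2
      = (of_nat (Suc (Suc (2*k)) choose Suc k) * (of_nat k + 1)) * (of_nat k + 1)"
    by (simp add: power2_eq_square)
  also have "\<dots> = (2 * of_nat k + 2) * (of_nat (Suc (2*k) choose k) * (of_nat k + 1))"
    using up mid by algebra
  also have "\<dots> = of_nat (2 * k choose k) * (2 * of_nat k + 1) * (2 * of_nat k + 2)"
    using low by algebra
  finally show ?thesis .
qed

lemma of_nat_choose_mult_power_Suc:
  "(of_nat (m choose k) :: 'a :: comm_ring_1) * c^(m - k) * c * (of_nat m + 1)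
     = of_nat (Suc m choose k) * (of_nat m + 1 - of_nat k) * c^(Suc m - k)"
proof (cases "k \<le> m")
  case True
  then have pow: "c^(m - k) * c = c^(Suc m - k)"
    by (simp add: Suc_diff_le)
  have "(of_nat (m choose k) :: 'a) * c^(m - k) * c * (of_nat m + 1)
      = ((of_nat m + 1) * of_nat (m choose k)) * (c^(m - k) * c)"
    by (simp add: ac_simps)
  also have "\<dots> = of_nat (Suc m choose k) * (of_nat m + 1 - of_nat k) * c^(Suc m - k)"
    by (simp only: of_nat_Suc_choose_mult[symmetric] pow)
  finally show ?thesis .
next
  case False
  then consider "k = Suc m" | "Suc m < k" by linarith
  then show ?thesis
    by cases (simp_all add: binomial_eq_0)
qed

lemma of_nat_choose_Suc_mult_power:
  "(of_nat (m choose Suc k) :: 'a :: comm_ring_1) * c^(m - Suc k) * c * (of_nat k + 1)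
     = of_nat (m choose k) * (of_nat m - of_nat k) * c^(m - k)"
proof (cases "k < m")
  case True
  then have pow: "c^(m - Suc k) * c = c^(m - k)"
    by (metis Suc_diff_Suc power_Suc2)
  have "(of_nat (m choose Suc k) :: 'a) * c^(m - Suc k) * c * (of_nat k + 1)
      = (of_nat (m choose Suc k) * (of_nat k + 1)) * (c^(m - Suc k) * c)"
    by (simp add: ac_simps)
  also have "\<dots> = of_nat (m choose k) * (of_nat m - of_nat k) * c^(m - k)"
    by (simp only: of_nat_choose_Suc_mult pow)
  finally show ?thesis .
next
  case False
  then consider "k = m" | "m < k" by linarith
  then show ?thesis
    by cases (simp_all add: binomial_eq_0)
qed

lemma sum_lessThan_eq_if_vanishing:
  fixes f :: "nat \<Rightarrow> 'a :: comm_monoid_add"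
  assumes "\<And>k. a \<le> k \<Longrightarrow> f k = 0" "a \<le> b"
  shows "(\<Sum>k<b. f k) = (\<Sum>k<a. f k)"
  by (rule sum.mono_neutral_right) (use assms in auto)

lemma sum_lessThan_telescope_vanishing:
  fixes f :: "nat \<Rightarrow> 'a :: ab_group_add"
  assumes "\<And>k. k < N \<Longrightarrow> f k = G (Suc k) - G k" "G 0 = 0" "G N = 0"
  shows "(\<Sum>k<N. f k) = 0"
  using assms by (simp add: sum_lessThan_telescope)

lemma neg_one_power_diff:
  assumes "k \<le> n"
  shows "(-1 :: 'a :: comm_ring_1)^(n - k) = (-1)^n * (-1)^k"
proof -
  have "(-1 :: 'a)^n = (-1)^(n - k) * (-1)^k"
    using assms by (simp flip: power_add)
  moreover have "(-1 :: 'a)^k * (-1)^k = 1"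
    by (simp flip: power_add power_mult_distrib)
  ultimately show ?thesis
    by (metis mult.assoc mult.right_neutral)
qed

lemma gbinomial_minus_of_nat_minus_one:
  "((- of_nat n - 1) gchoose k :: 'a :: field_char_0) = (-1)^k * of_nat (n + k choose k)"
proof -
  have "of_nat k - (- of_nat n - 1) - 1 = (of_nat (n + k) :: 'a)"
    by simp
  then show ?thesis
    by (simp only: gbinomial_negated_upper[of "- of_nat n - 1"] binomial_gbinomial)
qed

section \<open>The recurrence of the central trinomial coefficients\<close>

abbreviation trinomial :: "nat \<Rightarrow> rat" where
  "trinomial n \<equiv> of_nat (central_trinomial n)"

definition trinomial_term :: "nat \<Rightarrow> nat \<Rightarrow> rat" where
  "trinomial_term n k = of_nat (n choose (2 * k)) * of_nat (2 * k choose k)"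

definition trinomial_cert :: "nat \<Rightarrow> nat \<Rightarrow> rat" where
  "trinomial_cert n k = -4 / (of_nat n + 2) * of_nat k^2 * trinomial_term (Suc (Suc n)) k"

text \<open>In the termwise identities each binomial coefficient, power and certificate prefactor is an
  indeterminate, tied to its neighbours only by the ratio relations given as hypotheses, so that the
  identity becomes a polynomial consequence of them after clearing denominators. The letter gives
  the kind of factor (\<open>A\<close>: binomial with upper index \<open>n\<close>, \<open>B\<close>: with upper index \<open>n + k\<close>,
  \<open>C\<close>: \<open>binom(2k,k)\<close>, \<open>P\<close>: power of \<open>-3\<close> or \<open>3\<close>, \<open>Q\<close>: prefactor of the certificate),
  digits distinguish shifts of \<open>n\<close>, and \<open>k1\<close> marks the index \<open>k + 1\<close>.\<close>

lemma trinomial_recurrence_identity: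
  fixes N K A A1 A0 Am Ak1 C Ck1 Q :: rat
  assumes "N \<ge> 0" "K \<ge> 0"
    and "A1 * (N + 2) = A * (N + 2 - 2 * K)"
    and "A0 * (N + 1) = A1 * (N + 1 - 2 * K)"
    and "Am * (2 * K + 1) = A * (N + 2 - 2 * K)"
    and "Ak1 * (2 * K + 2) = Am * (N + 1 - 2 * K)"
    and "Ck1 * (K + 1)^2 = C * (2 * K + 1) * (2 * K + 2)"
    and "Q * (N + 2) = -4"
  shows "(N + 2) * (A * C) - (2 * N + 3) * (A1 * C) - 3 * (N + 1) * (A0 * C)
    = Q * (K + 1)^2 * (Ak1 * Ck1) - Q * K^2 * (A * C)"
proof -
  have "(N + 1) * (N + 2) * (K + 1)^2 * (2 * K + 1) * ((N + 2) * (A * C) - (2 * N + 3) * (A1 * C)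
      - 3 * (N + 1) * (A0 * C) - (Q * (K + 1)^2 * (Ak1 * Ck1) - Q * K^2 * (A * C))) = 0"
    using assms(3-) by algebra
  moreover have "(N + 1) * (N + 2) * (K + 1)^2 * (2 * K + 1) \<noteq> 0"
    using assms(1,2) by simp
  ultimately show ?thesis by simp
qed

lemma trinomial_term_telescoping:
  "(of_nat n + 2) * trinomial_term (Suc (Suc n)) k - (2 * of_nat n + 3) * trinomial_term (Suc n) k
     - 3 * (of_nat n + 1) * trinomial_term n k
   = trinomial_cert n (Suc k) - trinomial_cert n k"
proof -
  have A1: "(of_nat (Suc n choose (2 * k)) :: rat) * (of_nat n + 2)
      = of_nat (Suc (Suc n) choose (2 * k)) * (of_nat n + 2 - 2 * of_nat k)"
    using of_nat_Suc_choose_mult[of "Suc n" "2 * k", where 'a = rat] by (simp add: algebra_simps)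
  have A0: "(of_nat (n choose (2 * k)) :: rat) * (of_nat n + 1)
      = of_nat (Suc n choose (2 * k)) * (of_nat n + 1 - 2 * of_nat k)"
    using of_nat_Suc_choose_mult[of n "2 * k", where 'a = rat] by (simp add: algebra_simps)
  have Am: "(of_nat (Suc (Suc n) choose Suc (2 * k)) :: rat) * (2 * of_nat k + 1)
      = of_nat (Suc (Suc n) choose (2 * k)) * (of_nat n + 2 - 2 * of_nat k)"
    using of_nat_choose_Suc_mult[of "Suc (Suc n)" "2 * k", where 'a = rat]
    by (simp add: algebra_simps)
  have Ak1: "(of_nat (Suc (Suc n) choose (2 * Suc k)) :: rat) * (2 * of_nat k + 2)
      = of_nat (Suc (Suc n) choose Suc (2 * k)) * (of_nat n + 1 - 2 * of_nat k)"
    using of_nat_choose_Suc_mult[of "Suc (Suc n)" "Suc (2 * k)", where 'a = rat]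
    by (simp add: algebra_simps)
  have Q: "(-4 / (of_nat n + 2)) * (of_nat n + 2) = (-4 :: rat)"
    by (simp add: field_simps add_pos_nonneg flip: of_nat_Suc)
  have Suc_k: "(of_nat (Suc k) :: rat) = of_nat k + 1"
    by simp
  show ?thesis
    unfolding trinomial_cert_def trinomial_term_def Suc_k
    by (rule trinomial_recurrence_identity[OF _ _ A1 A0 Am Ak1 of_nat_central_binomial_Suc Q])
      simp_all
qed

lemma trinomial_eq_sum_trinomial_term:
  assumes "n div 2 < N"
  shows "trinomial n = (\<Sum>k<N. trinomial_term n k)"
proof -
  have "trinomial n = (\<Sum>k<Suc (n div 2). trinomial_term n k)"
    unfolding central_trinomial_def trinomial_term_def
    by (simp add: atLeast0AtMost lessThan_Suc_atMost)
  also have "\<dots> = (\<Sum>k<N. trinomial_term n k)"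
    using assms by (intro sum_lessThan_eq_if_vanishing[symmetric]) (auto simp: trinomial_term_def)
  finally show ?thesis .
qed

lemma central_trinomial_recurrence:
  "(of_nat n + 2) * trinomial (Suc (Suc n))
     = (2 * of_nat n + 3) * trinomial (Suc n) + 3 * (of_nat n + 1) * trinomial n"
proof -
  have "(of_nat n + 2) * trinomial (Suc (Suc n)) - (2 * of_nat n + 3) * trinomial (Suc n)
      - 3 * (of_nat n + 1) * trinomial n
    = (\<Sum>k<n + 2. (of_nat n + 2) * trinomial_term (Suc (Suc n)) k
        - (2 * of_nat n + 3) * trinomial_term (Suc n) k - 3 * (of_nat n + 1) * trinomial_term n k)"
    by (simp del: sum.lessThan_Suc
        add: trinomial_eq_sum_trinomial_term[of _ "n + 2"] sum_subtractf sum_distrib_left)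
  also have "\<dots> = 0"
    by (rule sum_lessThan_telescope_vanishing, rule trinomial_term_telescoping)
      (simp_all add: trinomial_cert_def trinomial_term_def binomial_eq_0)
  finally show ?thesis by simp
qed

section \<open>Hypergeometric sums for \<open>T(n)^2\<close> and \<open>T(n) T(n+1)\<close>\<close>

definition sq_term :: "nat \<Rightarrow> nat \<Rightarrow> rat" where
  "sq_term n k = of_nat (n choose k) * of_nat (n + k choose k) * of_nat (2 * k choose k) * (-3)^(n - k)"

definition prod_term :: "nat \<Rightarrow> nat \<Rightarrow> rat" where
  "prod_term n k = of_nat (n choose k) * of_nat (n + k + 1 choose k) * of_nat (2 * k choose k) * (-3)^(n - k)"

definition sq_cert :: "nat \<Rightarrow> nat \<Rightarrow> rat" where
  "sq_cert n k = -2 * (2 * of_nat n + 3) / ((of_nat n + 1) * (of_nat n + 2)) * of_nat k^3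
     * (of_nat (Suc (Suc n) choose k) * of_nat (n + k choose k) * of_nat (2 * k choose k)
        * (-3)^(Suc (Suc n) - k))"

lemma prod_term_recurrence_identity:
  fixes N K A A0 B B1 C P P0 :: rat
  assumes "N \<ge> 0"
    and "B1 * (N + 2) = (N + K + 2) * B"
    and "A0 * P0 * (-3) * (N + 1) = A * (N + 1 - K) * P"
  shows "(N + 2) * (A * B1 * C * P) = (2 * N + 3) * (A * B * C * P) + 3 * (N + 1) * (A0 * B * C * P0)"
proof -
  have "(N + 2) * (N + 1) * 3 * ((N + 2) * (A * B1 * C * P)
      - ((2 * N + 3) * (A * B * C * P) + 3 * (N + 1) * (A0 * B * C * P0))) = 0"
    using assms(2,3) by algebra
  moreover have "(N + 2) * (N + 1) * 3 \<noteq> 0"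
    using assms(1) by simp
  ultimately show ?thesis by simp
qed

lemma prod_term_recurrence:
  "(of_nat n + 2) * prod_term (Suc n) k
     = (2 * of_nat n + 3) * sq_term (Suc n) k + 3 * (of_nat n + 1) * prod_term n k"
proof -
  have B1: "(of_nat (Suc n + k + 1 choose k) :: rat) * (of_nat n + 2)
      = (of_nat n + of_nat k + 2) * of_nat (Suc n + k choose k)"
    using of_nat_Suc_choose_mult[of "Suc n + k" k, where 'a = rat] by (simp add: algebra_simps)
  have A0: "(of_nat (n choose k) :: rat) * (-3)^(n - k) * (-3) * (of_nat n + 1)
      = of_nat (Suc n choose k) * (of_nat n + 1 - of_nat k) * (-3)^(Suc n - k)"
    using of_nat_choose_mult_power_Suc[of n k "-3 :: rat"] by simp
  have "n + k + 1 = Suc n + k"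
    by simp
  then show ?thesis
    unfolding prod_term_def sq_term_def
    by (simp only:) (rule prod_term_recurrence_identity[OF _ B1 A0], simp)
qed

lemma sq_term_recurrence_identity:
  fixes N K A A1 A0 B B1 B2 C P P1 P0 Ak1 Bk1 Ck1 Pk1 Q :: rat
  assumes "N \<ge> 0" "K \<ge> 0"
    and "B1 * (N + 1) = (N + K + 1) * B"
    and "B2 * (N + 2) = (N + K + 2) * B1"
    and "A1 * P1 * (-3) * (N + 2) = A * (N + 2 - K) * P"
    and "A0 * P0 * (-3) * (N + 1) = A1 * (N + 1 - K) * P1"
    and "Ak1 * Pk1 * (-3) * (K + 1) = A * (N + 2 - K) * P"
    and "Bk1 * (K + 1) = B1 * (N + 1)"
    and "Ck1 * (K + 1)^2 = C * (2 * K + 1) * (2 * K + 2)"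
    and "Q * ((N + 1) * (N + 2)) = -2 * (2 * N + 3)"
  shows "(N + 2)^2 * (A * B2 * C * P) - (2 * N + 3)^2 * (A1 * B1 * C * P1)
      - 6 * (2 * N + 3) * (N + 1) * (A0 * B1 * C * P0) - 9 * (N + 1)^2 * (A0 * B * C * P0)
    = Q * (K + 1)^3 * (Ak1 * Bk1 * Ck1 * Pk1) - Q * K^3 * (A * B * C * P)"
proof -
  have "(N + 1)^3 * (N + 2)^3 * (K + 1)^4 * 9 * ((N + 2)^2 * (A * B2 * C * P)
      - (2 * N + 3)^2 * (A1 * B1 * C * P1) - 6 * (2 * N + 3) * (N + 1) * (A0 * B1 * C * P0)
      - 9 * (N + 1)^2 * (A0 * B * C * P0)
      - (Q * (K + 1)^3 * (Ak1 * Bk1 * Ck1 * Pk1) - Q * K^3 * (A * B * C * P))) = 0"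
    using assms(3-) by algebra
  moreover have "(N + 1)^3 * (N + 2)^3 * (K + 1)^4 * 9 \<noteq> 0"
    using assms(1,2) by simp
  ultimately show ?thesis by simp
qed

lemma sq_term_telescoping:
  "(of_nat n + 2)^2 * sq_term (Suc (Suc n)) k - (2 * of_nat n + 3)^2 * sq_term (Suc n) k
     - 6 * (2 * of_nat n + 3) * (of_nat n + 1) * prod_term n k - 9 * (of_nat n + 1)^2 * sq_term n k
   = sq_cert n (Suc k) - sq_cert n k"
proof -
  have B1: "(of_nat (n + k + 1 choose k) :: rat) * (of_nat n + 1)
      = (of_nat n + of_nat k + 1) * of_nat (n + k choose k)"
    using of_nat_Suc_choose_mult[of "n + k" k, where 'a = rat] by (simp add: algebra_simps)
  have B2: "(of_nat (Suc (Suc n) + k choose k) :: rat) * (of_nat n + 2)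
      = (of_nat n + of_nat k + 2) * of_nat (n + k + 1 choose k)"
    using of_nat_Suc_choose_mult[of "Suc n + k" k, where 'a = rat] by (simp add: algebra_simps)
  have A1: "(of_nat (Suc n choose k) :: rat) * (-3)^(Suc n - k) * (-3) * (of_nat n + 2)
      = of_nat (Suc (Suc n) choose k) * (of_nat n + 2 - of_nat k) * (-3)^(Suc (Suc n) - k)"
    using of_nat_choose_mult_power_Suc[of "Suc n" k "-3 :: rat"] by (simp add: algebra_simps)
  have A0: "(of_nat (n choose k) :: rat) * (-3)^(n - k) * (-3) * (of_nat n + 1)
      = of_nat (Suc n choose k) * (of_nat n + 1 - of_nat k) * (-3)^(Suc n - k)"
    using of_nat_choose_mult_power_Suc[of n k "-3 :: rat"] by (simp add: algebra_simps)
  have Ak1: "(of_nat (Suc (Suc n) choose Suc k) :: rat) * (-3)^(Suc (Suc n) - Suc k) * (-3) * (of_nat k + 1)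
      = of_nat (Suc (Suc n) choose k) * (of_nat n + 2 - of_nat k) * (-3)^(Suc (Suc n) - k)"
    using of_nat_choose_Suc_mult_power[of "Suc (Suc n)" k "-3 :: rat"] by (simp add: algebra_simps)
  have Bk1: "(of_nat (n + Suc k choose Suc k) :: rat) * (of_nat k + 1)
      = of_nat (n + k + 1 choose k) * (of_nat n + 1)"
    using of_nat_choose_Suc_mult[of "n + Suc k" k, where 'a = rat] by (simp add: algebra_simps)
  have Q: "(-2 * (2 * of_nat n + 3) / ((of_nat n + 1) * (of_nat n + 2))) * ((of_nat n + 1) * (of_nat n + 2))
      = (-2 * (2 * of_nat n + 3) :: rat)"
    by (simp add: add_pos_nonneg flip: of_nat_Suc)
  have Suc_n_k: "Suc n + k = n + k + 1"
    by simp
  have Suc_k: "(of_nat (Suc k) :: rat) = of_nat k + 1"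
    by simp
  show ?thesis
    unfolding sq_term_def prod_term_def sq_cert_def Suc_n_k Suc_k
    by (rule sq_term_recurrence_identity[OF _ _ B1 B2 A1 A0 Ak1 Bk1 of_nat_central_binomial_Suc Q])
      simp_all
qed

definition sq_sum :: "nat \<Rightarrow> rat" where
  "sq_sum n = (\<Sum>k<Suc n. sq_term n k)"

definition prod_sum :: "nat \<Rightarrow> rat" where
  "prod_sum n = (\<Sum>k<Suc n. prod_term n k)"

lemma sq_sum_eq_lessThan:
  "n < N \<Longrightarrow> sq_sum n = (\<Sum>k<N. sq_term n k)"
  unfolding sq_sum_def
  by (rule sum_lessThan_eq_if_vanishing[symmetric]) (auto simp: sq_term_def)

lemma prod_sum_eq_lessThan:
  "n < N \<Longrightarrow> prod_sum n = (\<Sum>k<N. prod_term n k)"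
  unfolding prod_sum_def
  by (rule sum_lessThan_eq_if_vanishing[symmetric]) (auto simp: prod_term_def)

lemma prod_sum_recurrence:
  "(of_nat n + 2) * prod_sum (Suc n) = (2 * of_nat n + 3) * sq_sum (Suc n) + 3 * (of_nat n + 1) * prod_sum n"
  unfolding prod_sum_def[of "Suc n"] sq_sum_def[of "Suc n"]
    prod_sum_eq_lessThan[of n "Suc (Suc n)", OF less_SucI[OF lessI]]
  by (simp only: sum_distrib_left prod_term_recurrence sum.distrib)

lemma sq_sum_recurrence:
  "(of_nat n + 2)^2 * sq_sum (Suc (Suc n)) = (2 * of_nat n + 3)^2 * sq_sum (Suc n)
     + 6 * (2 * of_nat n + 3) * (of_nat n + 1) * prod_sum n + 9 * (of_nat n + 1)^2 * sq_sum n"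
proof -
  let ?N = "Suc (Suc (Suc n))"
  have "(of_nat n + 2)^2 * sq_sum (Suc (Suc n)) - (2 * of_nat n + 3)^2 * sq_sum (Suc n)
      - 6 * (2 * of_nat n + 3) * (of_nat n + 1) * prod_sum n - 9 * (of_nat n + 1)^2 * sq_sum n
    = (\<Sum>k<?N. (of_nat n + 2)^2 * sq_term (Suc (Suc n)) k - (2 * of_nat n + 3)^2 * sq_term (Suc n) k
        - 6 * (2 * of_nat n + 3) * (of_nat n + 1) * prod_term n k - 9 * (of_nat n + 1)^2 * sq_term n k)"
    by (simp only: sq_sum_eq_lessThan[of _ ?N] prod_sum_eq_lessThan[of _ ?N] less_Suc_eq
        sum_subtractf sum_distrib_left simp_thms)
  also have "\<dots> = 0"
    by (rule sum_lessThan_telescope_vanishing, rule sq_term_telescoping)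
      (simp_all add: sq_cert_def binomial_eq_0)
  finally show ?thesis by simp
qed

lemma sq_sum_prod_sum_closed_form:
  "sq_sum n = trinomial n ^ 2 \<and> prod_sum n = trinomial n * trinomial (Suc n)
     \<and> sq_sum (Suc n) = trinomial (Suc n) ^ 2"
proof (induction n)
  case 0
  show ?case
    by (simp add: sq_sum_def prod_sum_def sq_term_def prod_term_def central_trinomial_def)
next
  case (Suc n)
  let ?N = "of_nat n :: rat"
  have sq: "sq_sum n = trinomial n ^ 2" and prod: "prod_sum n = trinomial n * trinomial (Suc n)"
    and sq_Suc: "sq_sum (Suc n) = trinomial (Suc n) ^ 2"
    using Suc.IH by auto
  have pos: "?N + 2 \<noteq> 0"
    by (simp add: add_nonneg_pos)
  note rec = central_trinomial_recurrence[of n]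
  have "(?N + 2) * prod_sum (Suc n) = (2 * ?N + 3) * sq_sum (Suc n) + 3 * (?N + 1) * prod_sum n"
    by (rule prod_sum_recurrence)
  also have "\<dots> = trinomial (Suc n) * ((2 * ?N + 3) * trinomial (Suc n) + 3 * (?N + 1) * trinomial n)"
    unfolding prod sq_Suc by (simp add: algebra_simps power2_eq_square)
  also have "\<dots> = (?N + 2) * (trinomial (Suc n) * trinomial (Suc (Suc n)))"
    unfolding rec[symmetric] by (simp add: algebra_simps)
  finally have prod_Suc: "prod_sum (Suc n) = trinomial (Suc n) * trinomial (Suc (Suc n))"
    using pos by simp
  have "(?N + 2)^2 * sq_sum (Suc (Suc n)) = (2 * ?N + 3)^2 * sq_sum (Suc n)
      + 6 * (2 * ?N + 3) * (?N + 1) * prod_sum n + 9 * (?N + 1)^2 * sq_sum n"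
    by (rule sq_sum_recurrence)
  also have "\<dots> = ((2 * ?N + 3) * trinomial (Suc n) + 3 * (?N + 1) * trinomial n)^2"
    unfolding sq prod sq_Suc by (simp add: algebra_simps power2_eq_square)
  also have "\<dots> = (?N + 2)^2 * trinomial (Suc (Suc n))^2"
    unfolding rec[symmetric] by (simp add: power_mult_distrib)
  finally have "sq_sum (Suc (Suc n)) = trinomial (Suc (Suc n))^2"
    using pos by simp
  with sq_Suc prod_Suc show ?case
    by simp
qed

lemma prod_sum_eq_trinomial_mult:
  "prod_sum n = trinomial n * trinomial (Suc n)"
  using sq_sum_prod_sum_closed_form by blast

section \<open>Telescoping the right-hand side\<close>

definition rhs_term :: "nat \<Rightarrow> nat \<Rightarrow> rat" where
  "rhs_term m k = of_nat (m choose k) * ((-1)^k * of_nat (Suc m + k choose k)) * catalan k * 3^(m - k)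
     * of_int (a_coef (int (Suc m)) (int k))"

definition rhs_cert :: "nat \<Rightarrow> nat \<Rightarrow> rat" where
  "rhs_cert m k = -2 * (2 * of_nat m + 3) * of_nat m / 3 * of_nat k^2 * sq_term (Suc m) k"

lemma of_int_a_coef:
  "(of_int (a_coef (int n) (int k)) :: 'a :: comm_ring_1)
     = 4*of_nat k^2*of_nat n^2 - 8*of_nat k*of_nat n^3 - 14*of_nat k^2*of_nat n - 14*of_nat k*of_nat n^2
       - 4*of_nat n^3 + 13*of_nat k^2 - 11*of_nat k*of_nat n - 26*of_nat n^2 + 39*of_nat k + 4*of_nat n + 26"
  by (simp add: a_coef_def)

lemma rhs_cert_rational_identity:
  fixes M K Q a1 a0 :: rat
  assumes "a1 = 4*K^2*(M+2)^2 - 8*K*(M+2)^3 - 14*K^2*(M+2) - 14*K*(M+2)^2 - 4*(M+2)^3 + 13*K^2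
      - 11*K*(M+2) - 26*(M+2)^2 + 39*K + 4*(M+2) + 26"
    and "a0 = 4*K^2*(M+1)^2 - 8*K*(M+1)^3 - 14*K^2*(M+1) - 14*K*(M+1)^2 - 4*(M+1)^3 + 13*K^2
      - 11*K*(M+1) - 26*(M+1)^2 + 39*K + 4*(M+1) + 26"
    and "Q * 3 = -2 * (2 * M + 3) * M"
  shows "-3 * (K + 1) * (M + K + 2) * a1 - (K + 1) * (M + 1 - K) * a0
      - 18 * (K + 1)^2 * (M + 1) * (8 * M + 17) * (M + K + 2)
      + 6 * Q * (M + 1 - K) * (M + K + 2) * (2 * K + 1) * (2 * K + 2) + 18 * Q * (K + 1)^2 * K^2 = 0"
  using assms by algebra

lemma rhs_difference_identity:
  fixes M K s1 sk A A0 B B1 C Cat P P0 Ak1 Bk1 Ck1 Pk1 Q a1 a0 :: rat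
  assumes "M \<ge> 0" "K \<ge> 0"
    and A0: "A0 * P0 * 3 * (M + 1) = A * (M + 1 - K) * P"
    and B1: "B1 * (M + 2) = (M + K + 2) * B"
    and Ak1: "Ak1 * Pk1 * (-3) * (K + 1) = A * (M + 1 - K) * (s1 * sk * P)"
    and Bk1: "Bk1 * (K + 1) = B1 * (M + 2)"
    and Ck1: "Ck1 * (K + 1)^2 = C * (2 * K + 1) * (2 * K + 2)"
    and Cat: "Cat * (K + 1) = C"
    and a1: "a1 = 4*K^2*(M+2)^2 - 8*K*(M+2)^3 - 14*K^2*(M+2) - 14*K*(M+2)^2 - 4*(M+2)^3 + 13*K^2
      - 11*K*(M+2) - 26*(M+2)^2 + 39*K + 4*(M+2) + 26"
    and a0: "a0 = 4*K^2*(M+1)^2 - 8*K*(M+1)^3 - 14*K^2*(M+1) - 14*K*(M+1)^2 - 4*(M+1)^3 + 13*K^2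
      - 11*K*(M+1) - 26*(M+1)^2 + 39*K + 4*(M+1) + 26"
    and Q: "Q * 3 = -2 * (2 * M + 3) * M"
  shows "(- s1 * (M + 2) / 6) * (A * (sk * B1) * Cat * P * a1)
      - (s1 * (M + 1) / 6) * (A0 * (sk * B) * Cat * P0 * a0)
      - (M + 1) * (M + 2) * (8 * M + 17) * (A * B1 * C * (s1 * sk * P))
    = Q * (K + 1)^2 * (Ak1 * Bk1 * Ck1 * Pk1) - Q * K^2 * (A * B * C * (s1 * sk * P))"
proof -
  define X where "X = A * B * C * (s1 * sk * P)"
  define T1 where "T1 = (- s1 * (M + 2) / 6) * (A * (sk * B1) * Cat * P * a1)"
  define T2 where "T2 = (s1 * (M + 1) / 6) * (A0 * (sk * B) * Cat * P0 * a0)"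
  define T3 where "T3 = (M + 1) * (M + 2) * (8 * M + 17) * (A * B1 * C * (s1 * sk * P))"
  define T4 where "T4 = Q * (K + 1)^2 * (Ak1 * Bk1 * Ck1 * Pk1)"
  have t1: "6 * (K + 1) * T1 = - X * (M + K + 2) * a1"
    unfolding T1_def X_def using B1 Cat by algebra
  have t2: "18 * (K + 1) * (M + 1) * T2 = X * (M + 1) * (M + 1 - K) * a0"
    unfolding T2_def X_def using A0 Cat by algebra
  have t3: "(M + 2) * T3 = X * (M + 1) * (M + 2) * (8 * M + 17) * (M + K + 2)"
    unfolding T3_def X_def using B1 by algebra
  have t4: "-3 * (K + 1)^4 * T4 = X * Q * (K + 1)^2 * (M + 1 - K) * (M + K + 2) * (2 * K + 1) * (2 * K + 2)"
    unfolding T4_def X_def using Ak1 Bk1 Ck1 B1 by algebra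
  have "18 * (K + 1)^4 * (M + 1) * (M + 2) * (T1 - T2 - T3 - (T4 - Q * K^2 * X))
      = 3 * (K + 1)^3 * (M + 1) * (M + 2) * (6 * (K + 1) * T1)
        - (K + 1)^3 * (M + 2) * (18 * (K + 1) * (M + 1) * T2) - 18 * (K + 1)^4 * (M + 1) * ((M + 2) * T3)
        + 6 * (M + 1) * (M + 2) * (-3 * (K + 1)^4 * T4) + 18 * (K + 1)^4 * (M + 1) * (M + 2) * Q * K^2 * X"
    by algebra
  also have "\<dots> = X * (K + 1)^2 * (M + 1) * (M + 2) * (-3 * (K + 1) * (M + K + 2) * a1
      - (K + 1) * (M + 1 - K) * a0 - 18 * (K + 1)^2 * (M + 1) * (8 * M + 17) * (M + K + 2)
      + 6 * Q * (M + 1 - K) * (M + K + 2) * (2 * K + 1) * (2 * K + 2) + 18 * Q * (K + 1)^2 * K^2)"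
    unfolding t1 t2 t3 t4 by algebra
  also have "\<dots> = 0"
    unfolding rhs_cert_rational_identity[OF a1 a0 Q] by simp
  finally have "T1 - T2 - T3 = T4 - Q * K^2 * X"
    using assms(1,2) by simp
  then show ?thesis
    unfolding T1_def T2_def T3_def T4_def X_def .
qed

lemma rhs_term_difference:
  assumes "k \<le> Suc m"
  shows "(- ((-1)^(Suc m)) * (of_nat m + 2) / 6) * rhs_term (Suc m) k
      - ((-1)^(Suc m) * (of_nat m + 1) / 6) * rhs_term m k
      - (of_nat m + 1) * (of_nat m + 2) * (8 * of_nat m + 17) * prod_term (Suc m) k
    = rhs_cert m (Suc k) - rhs_cert m k"
proof -
  have "(-3 :: rat)^(Suc m - k) = (-1)^(Suc m - k) * 3^(Suc m - k)"
    by (simp flip: power_mult_distrib)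
  then have sign: "(-3 :: rat)^(Suc m - k) = (-1)^(Suc m) * (-1)^k * 3^(Suc m - k)"
    by (simp only: neg_one_power_diff[OF assms])
  have A0: "(of_nat (m choose k) :: rat) * 3^(m - k) * 3 * (of_nat m + 1)
      = of_nat (Suc m choose k) * (of_nat m + 1 - of_nat k) * 3^(Suc m - k)"
    using of_nat_choose_mult_power_Suc[of m k "3 :: rat"] by simp
  have B1: "(of_nat (Suc (Suc m) + k choose k) :: rat) * (of_nat m + 2)
      = (of_nat m + of_nat k + 2) * of_nat (Suc m + k choose k)"
    using of_nat_Suc_choose_mult[of "Suc m + k" k, where 'a = rat] by (simp add: algebra_simps)
  have Ak1: "(of_nat (Suc m choose Suc k) :: rat) * (-3)^(Suc m - Suc k) * (-3) * (of_nat k + 1)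
      = of_nat (Suc m choose k) * (of_nat m + 1 - of_nat k) * ((-1)^(Suc m) * (-1)^k * 3^(Suc m - k))"
    using of_nat_choose_Suc_mult_power[of "Suc m" k "-3 :: rat"] unfolding sign by simp
  have Bk1: "(of_nat (Suc m + Suc k choose Suc k) :: rat) * (of_nat k + 1)
      = of_nat (Suc (Suc m) + k choose k) * (of_nat m + 2)"
    using of_nat_choose_Suc_mult[of "Suc m + Suc k" k, where 'a = rat] by (simp add: algebra_simps)
  have Cat: "catalan k * (of_nat k + 1) = of_nat (2 * k choose k)"
    by (simp add: catalan_def field_simps add_pos_nonneg flip: of_nat_Suc)
  have Q: "(-2 * (2 * of_nat m + 3) * of_nat m / 3) * 3 = (-2 * (2 * of_nat m + 3) * of_nat m :: rat)"
    by simp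
  have Suc_m_k: "Suc m + k + 1 = Suc (Suc m) + k"
    by simp
  have of_nat_Suc_eqs: "(of_nat (Suc k) :: rat) = of_nat k + 1"
      "(of_nat (Suc (Suc m)) :: rat) = of_nat m + 2" "(of_nat (Suc m) :: rat) = of_nat m + 1"
    by simp_all
  show ?thesis
    unfolding rhs_term_def prod_term_def rhs_cert_def sq_term_def sign Suc_m_k of_int_a_coef
      of_nat_Suc_eqs
    by (rule rhs_difference_identity[OF _ _ A0 B1 Ak1 Bk1 of_nat_central_binomial_Suc Cat _ _ Q])
      simp_all
qed

text \<open>\<open>rhs_sum m\<close> is the right-hand side of the theorem for \<open>n = m + 1\<close>, with
  \<open>binom(-n-1,k)\<close> already rewritten as \<open>(-1)^k binom(n+k,k)\<close>.\<close>

definition rhs_sum :: "nat \<Rightarrow> rat" where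
  "rhs_sum m = ((-1)^(Suc m) * of_nat (Suc m) / 6) * (\<Sum>k<Suc m. rhs_term m k)"

lemma rhs_sum_Suc:
  "rhs_sum (Suc m) - rhs_sum m = (of_nat m + 1) * (of_nat m + 2) * (8 * of_nat m + 17) * prod_sum (Suc m)"
proof -
  let ?c = "(of_nat m + 1) * (of_nat m + 2) * (8 * of_nat m + 17) :: rat"
  have extend: "(\<Sum>k<Suc m. rhs_term m k) = (\<Sum>k<Suc (Suc m). rhs_term m k)"
    by (rule sum_lessThan_eq_if_vanishing[symmetric]) (auto simp: rhs_term_def)
  have prefactors:
      "(-1 :: rat)^(Suc (Suc m)) * of_nat (Suc (Suc m)) / 6 = - ((-1)^(Suc m)) * (of_nat m + 2) / 6"
      "(of_nat (Suc m) :: rat) = of_nat m + 1"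
    by simp_all
  have "rhs_sum (Suc m) - rhs_sum m - ?c * prod_sum (Suc m)
      = (\<Sum>k<Suc (Suc m). (- ((-1)^(Suc m)) * (of_nat m + 2) / 6) * rhs_term (Suc m) k
          - ((-1)^(Suc m) * (of_nat m + 1) / 6) * rhs_term m k - ?c * prod_term (Suc m) k)"
    unfolding rhs_sum_def extend prod_sum_def prefactors
    by (simp only: sum_subtractf sum_distrib_left)
  also have "\<dots> = 0"
    by (rule sum_lessThan_telescope_vanishing, rule rhs_term_difference)
      (simp_all add: rhs_cert_def sq_term_def binomial_eq_0)
  finally show ?thesis
    by simp
qed

lemma sum_trinomial_products_eq_rhs_sum:
  "(\<Sum>k<Suc m. of_nat (k * (k + 1) * (8 * k + 9) * central_trinomial k * central_trinomial (k + 1)) :: rat)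
     = rhs_sum m"
proof (induction m)
  case 0
  show ?case
    by (simp add: rhs_sum_def rhs_term_def a_coef_def)
next
  case (Suc m)
  have "(\<Sum>k<Suc (Suc m). of_nat (k * (k + 1) * (8 * k + 9) * central_trinomial k * central_trinomial (k + 1)) :: rat)
      = rhs_sum m + (of_nat m + 1) * (of_nat m + 2) * (8 * of_nat m + 17)
          * (trinomial (Suc m) * trinomial (Suc (Suc m)))"
    using Suc.IH by (simp add: algebra_simps)
  also have "\<dots> = rhs_sum (Suc m)"
    using rhs_sum_Suc[of m] prod_sum_eq_trinomial_mult[of "Suc m"] by simp
  finally show ?case .
qed

theorem lemma3p2:
  fixes n :: nat
  assumes "n \<ge> 1"
  shows "(\<Sum>k = 0..n-1. of_nat (k * (k+1) * (8*k+9) * central_trinomial k * central_trinomial (k+1)) :: rat)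
    = ((-1)^n * of_nat n / 6) *
      (\<Sum>k = 0..n-1. of_nat ((n-1) choose k) * ((- of_nat n - 1) gchoose k) * catalan k
          * 3^(n-1-k) * of_int (a_coef (int n) (int k)))"
proof -
  obtain m where n: "n = Suc m"
    using assms by (cases n) auto
  have range: "{0..n-1} = {..<Suc m}"
    unfolding n by auto
  show ?thesis
    unfolding range sum_trinomial_products_eq_rhs_sum
    unfolding rhs_sum_def n gbinomial_minus_of_nat_minus_one
    by (simp add: rhs_term_def)
qed

end
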